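(* Let $\mathbb{X},\mathbb{X}'\subseteq\mathbb{P}^{k-1}$ be sets of $n\ge2$ $\mathbb{F}_q$-rational points each, let $L,L'\in P_1$ be linear forms with $L$ vanishing at no point of $\mathbb{X}$ and $L'$ vanishing at no point of $\mathbb{X}'$, and let $\Phi_{\mathbb{X}}$ (built with $L$) and $\Phi_{\mathbb{X}'}$ (built with $L'$) be Macaulay inverse polynomials. Let $A\in\mathrm{GL}_k(\mathbb{F}_q)$ satisfy $\lambda_A(L)=L'$. If $\Lambda_A(\mathbb{X})=\mathbb{X}'$, then $r_{\mathbb{X}}=r_{\mathbb{X}'}$ and there is $c\in\mathbb{F}_q\setminus\{0\}$ such that $\Phi_{\mathbb{X}'}(\lambda_A(g))=c\,\Phi_{\mathbb{X}}(g)$ for all $g\in P_{2r_{\mathbb{X}}-1}$.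
   Context: $P=\mathbb{F}_q[x_1,\dots,x_k]$ standard graded. For a set $\mathbb{X}=\{p_1,\dots,p_n\}$ of distinct $\mathbb{F}_q$-rational points of $\mathbb{P}^{k-1}$: $R=P/I_{\mathbb{X}}$, $r_{\mathbb{X}}=\min\{i:\dim R_i=n\}$; given $L$ vanishing at no point, $\ell$ its class, $v_j$ the representative of $p_j$ with $L(v_j)=1$, $f(p_j)=f(v_j)$; separators $f_1,\dots,f_n\in R_{r_{\mathbb{X}}}$ with $f_i(p_j)=\delta_{ij}$; canonical ideal $\mathfrak{J}_{R/\mathbb{F}_q[\ell]}=\{\sum_i\varphi(f_i)f_i:\varphi\in\mathrm{Hom}_{\mathbb{F}_q[\ell]}(R,\mathbb{F}_q[\ell])\}$; $\widehat{\mathfrak{J}}_{\mathbb{X}}\subseteq P$ its preimage, so that $D_{\mathbb{X}}=P/\widehat{\mathfrak{J}}_{\mathbb{X}}$ (the doubling) is Artinian Gorenstein with top degree $2r_{\mathbb{X}}-1$. The graded dual $\mathcal{D}=\bigoplus_j\mathrm{Hom}_{\mathbb{F}_q}(P_j,\mathbb{F}_q)$ is a $P$-module via contraction $(f\circ\psi)(g)=\psi(fg)$; the Macaulay inverse system of an ideal $J$ is $J^\perp=\{\psi:f\circ\psi=0\ \forall f\in J\}$. A Macaulay inverse polynomial $\Phi_{\mathbb{X}}$ is an element of $\mathrm{Hom}_{\mathbb{F}_q}(P_{2r_{\mathbb{X}}-1},\mathbb{F}_q)$ generating $(\widehat{\mathfrak{J}}_{\mathbb{X}})^\perp$ as a $P$-module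 (unique up to a nonzero scalar). For $A\in\mathrm{GL}_k(\mathbb{F}_q)$, $\Lambda_A(p)=Ap$ on $\mathbb{P}^{k-1}$ and $\lambda_A:P\to P$ is the graded automorphism $\lambda_A(f)(v)=f(A^{-1}v)$. *)

theory Defs
  imports "HOL-Analysis.Analysis" "HOL-Library.Poly_Mapping"
begin

text \<open>Polynomial ring P = F[x_i : i in 'n] (k = CARD('n)), as finitely supported
 maps from exponent vectors (monomials) to coefficients.\<close>

type_synonym ('n, 'a) mpoly = "('n \<Rightarrow>\<^sub>0 nat) \<Rightarrow>\<^sub>0 'a"

definition mdeg :: "('n::finite \<Rightarrow>\<^sub>0 nat) \<Rightarrow> nat" where
  "mdeg m = (\<Sum>i\<in>UNIV. Poly_Mapping.lookup m i)"

definition Const :: "'a::zero \<Rightarrow> ('n, 'a) mpoly" where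
  "Const c = Poly_Mapping.single 0 c"

definition Var :: "'n \<Rightarrow> ('n, 'a::{zero,one}) mpoly" where
  "Var i = Poly_Mapping.single (Poly_Mapping.single i 1) 1"

definition smul :: "'a::semiring_0 \<Rightarrow> ('n, 'a) mpoly \<Rightarrow> ('n, 'a) mpoly" where
  "smul c f = Poly_Mapping.map (\<lambda>x. c * x) f"

definition Pdeg :: "nat \<Rightarrow> ('n::finite, 'a::zero) mpoly set" where
  "Pdeg j = {f. \<forall>m\<in>Poly_Mapping.keys f. mdeg m = j}"

definition hcomp :: "nat \<Rightarrow> ('n::finite, 'a::zero) mpoly \<Rightarrow> ('n, 'a) mpoly" where
  "hcomp j f = Abs_poly_mapping (\<lambda>m. if mdeg m = j then Poly_Mapping.lookup f m else 0)"

definition peval :: "('n::finite, 'a::comm_semiring_1) mpoly \<Rightarrow> 'a^'n \<Rightarrow> 'a" where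
  "peval f v = (\<Sum>m\<in>Poly_Mapping.keys f. Poly_Mapping.lookup f m * (\<Prod>i\<in>UNIV. (v $ i) ^ Poly_Mapping.lookup m i))"

definition psubst :: "('n \<Rightarrow> ('n, 'a) mpoly) \<Rightarrow> ('n::finite, 'a::comm_semiring_1) mpoly \<Rightarrow> ('n, 'a) mpoly" where
  "psubst \<sigma> f = (\<Sum>m\<in>Poly_Mapping.keys f. Const (Poly_Mapping.lookup f m) * (\<Prod>i\<in>UNIV. (\<sigma> i) ^ Poly_Mapping.lookup m i))"

text \<open>lambda_A: graded automorphism with lambda_A(f)(v) = f(A^{-1} v), i.e. the
 substitution x_i := sum_j (A^{-1})_{ij} x_j.\<close>
definition lamA :: "'a^'n^'n \<Rightarrow> ('n::finite, 'a::field) mpoly \<Rightarrow> ('n, 'a) mpoly" where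
  "lamA A f = psubst (\<lambda>i. \<Sum>j\<in>UNIV. Const (matrix_inv A $ i $ j) * Var j) f"

text \<open>Points of P^{k-1} over F: lines through the origin minus 0.\<close>
definition proj_pt :: "'a::field^'n \<Rightarrow> ('a^'n) set" where
  "proj_pt v = {c *s v | c. c \<noteq> 0}"

definition is_ppoint :: "('a::field^'n) set \<Rightarrow> bool" where
  "is_ppoint p \<longleftrightarrow> (\<exists>v. v \<noteq> 0 \<and> p = proj_pt v)"

definition LamA :: "'a::field^'n^'n \<Rightarrow> ('a^'n) set \<Rightarrow> ('a^'n) set" where
  "LamA A p = (\<lambda>w. A *v w) ` p"

definition nrep :: "('n::finite, 'a::field) mpoly \<Rightarrow> ('a^'n) set \<Rightarrow> 'a^'n" where
  "nrep L p = (THE v. v \<in> p \<and> peval L v = 1)"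

definition vanI :: "('a::field^'n::finite) set set \<Rightarrow> ('n, 'a) mpoly set" where
  "vanI X = {f. \<forall>j. \<forall>p\<in>X. \<forall>v\<in>p. peval (hcomp j f) v = 0}"

text \<open>dim_F R_i = dim_F P_i - dim_F (I_X)_i, with R = P / I_X.\<close>
definition hf :: "('a::{field,finite}^'n::finite) set set \<Rightarrow> nat \<Rightarrow> nat" where
  "hf X i = vector_space.dim (smul :: 'a \<Rightarrow> ('n,'a) mpoly \<Rightarrow> _) (Pdeg i)
          - vector_space.dim (smul :: 'a \<Rightarrow> ('n,'a) mpoly \<Rightarrow> _) (Pdeg i \<inter> vanI X)"

definition regidx :: "('a::{field,finite}^'n::finite) set set \<Rightarrow> nat" where
  "regidx X = (LEAST i. hf X i = card X)"

definition sep :: "('a::{field,finite}^'n::finite) set set \<Rightarrow> ('n, 'a) mpoly \<Rightarrow> ('a^'n) set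
     \<Rightarrow> ('n, 'a) mpoly" where
  "sep X L p = (SOME f. f \<in> Pdeg (regidx X) \<and>
       (\<forall>p'\<in>X. peval f (nrep L p') = (if p' = p then 1 else 0)))"

text \<open>Subring F[ell] (represented in P as polynomials in L).\<close>
definition FL :: "('n::finite, 'a::field) mpoly \<Rightarrow> ('n, 'a) mpoly set" where
  "FL L = {f. \<exists>N c. f = (\<Sum>i<N. Const (c i) * L ^ i)}"

text \<open>A map phi : P -> P representing an element of Hom_{F[ell]}(R, F[ell]):
 well defined modulo I_X, with values in F[ell], additive and F[ell]-linear in R.\<close>
definition is_hom :: "('a::{field,finite}^'n::finite) set set \<Rightarrow> ('n, 'a) mpoly
     \<Rightarrow> (('n, 'a) mpoly \<Rightarrow> ('n, 'a) mpoly) \<Rightarrow> bool" where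
  "is_hom X L \<phi> \<longleftrightarrow>
     (\<forall>f g. f - g \<in> vanI X \<longrightarrow> \<phi> f - \<phi> g \<in> vanI X) \<and>
     (\<forall>f. \<exists>u\<in>FL L. \<phi> f - u \<in> vanI X) \<and>
     (\<forall>f g. \<phi> (f + g) - (\<phi> f + \<phi> g) \<in> vanI X) \<and>
     (\<forall>u\<in>FL L. \<forall>f. \<phi> (u * f) - u * \<phi> f \<in> vanI X)"

text \<open>Preimage in P of the canonical ideal J_{R/F[ell]}.\<close>
definition Jhat :: "('a::{field,finite}^'n::finite) set set \<Rightarrow> ('n, 'a) mpoly \<Rightarrow> ('n, 'a) mpoly set" where
  "Jhat X L = {g. \<exists>\<phi>. is_hom X L \<phi> \<and>
      g - (\<Sum>p\<in>X. \<phi> (sep X L p) * sep X L p) \<in> vanI X}"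

text \<open>Graded dual D = (+)_j Hom_F(P_j, F), an element (psi_j)_j being identified
 with the F-linear functional g |-> sum_j psi_j(g_j) on P (vanishing in high degrees).\<close>
definition gdual :: "(('n::finite, 'a::field) mpoly \<Rightarrow> 'a) set" where
  "gdual = {\<psi>. (\<forall>f g. \<psi> (f + g) = \<psi> f + \<psi> g) \<and> (\<forall>c f. \<psi> (smul c f) = c * \<psi> f) \<and>
              (\<exists>N. \<forall>f. (\<forall>m\<in>Poly_Mapping.keys f. N \<le> mdeg m) \<longrightarrow> \<psi> f = 0)}"

definition contr :: "('n::finite, 'a::field) mpoly \<Rightarrow> (('n, 'a) mpoly \<Rightarrow> 'a) \<Rightarrow> (('n, 'a) mpoly \<Rightarrow> 'a)" where
  "contr f \<psi> = (\<lambda>g. \<psi> (f * g))"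

definition iperp :: "('n::finite, 'a::field) mpoly set \<Rightarrow> (('n, 'a) mpoly \<Rightarrow> 'a) set" where
  "iperp J = {\<psi>\<in>gdual. \<forall>f\<in>J. contr f \<psi> = (\<lambda>_. 0)}"

text \<open>Phi is a Macaulay inverse polynomial of X (built with L): an element of
 Hom_F(P_{2r_X-1}, F) (a functional factoring through the degree 2r_X-1 component)
 generating (Jhat_X)^perp as a P-module.\<close>
definition is_mip :: "('a::{field,finite}^'n::finite) set set \<Rightarrow> ('n, 'a) mpoly
     \<Rightarrow> (('n, 'a) mpoly \<Rightarrow> 'a) \<Rightarrow> bool" where
  "is_mip X L \<Phi> \<longleftrightarrow> \<Phi> \<in> gdual \<and> (\<forall>g. \<Phi> g = \<Phi> (hcomp (2 * regidx X - 1) g)) \<and>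
      iperp (Jhat X L) = {contr f \<Phi> | f. True}"

end

theory Submission
  imports Defs "HOL-Library.Function_Algebras"
begin

text \<open>
  The coordinate change \<open>lamA A\<close> is a degree-preserving ring automorphism of \<open>P\<close> with
  \<open>lamA A f (A v) = f v\<close>. It therefore maps the vanishing ideal of \<open>X\<close> onto that of
  \<open>X' = A X\<close> degree by degree, so both have the same Hilbert function and regularity index;
  it maps the separators of \<open>X\<close> to those of \<open>X'\<close> modulo the vanishing ideal and conjugates
  \<open>F[l]\<close>-linear maps \<open>R \<rightarrow> F[l]\<close> into \<open>F[l']\<close>-linear ones, hence maps the canonical ideal
  of \<open>X\<close> into that of \<open>X'\<close>. Consequently \<open>\<Phi>' \<circ> lamA A\<close> lies in the inverse system of
  the canonical ideal of \<open>X\<close>, i.e. it is \<open>h \<circ> \<Phi>\<close>, and in the top degree \<open>2 r - 1\<close> only the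
  constant term \<open>c\<close> of \<open>h\<close> contributes. Finally \<open>c \<noteq> 0\<close>: as \<open>n \<ge> 2\<close>, separators have
  positive degree, so taking the constant term is a functional in the inverse system of \<open>X'\<close>,
  which forces \<open>\<Phi>'\<close> not to vanish in the top degree.

  That the regularity index is attained at all, and that the chosen separators separate, rests
  on rank-nullity: the Hilbert function in degree \<open>r\<close> is the dimension of the space of value
  vectors of forms of degree \<open>r\<close>, and products of linear forms provide separators of degree
  \<open>n - 1\<close>.
\<close>

section \<open>Linear algebra\<close>

lemma (in vector_space) span_disjoint_subsets_eq_0:
  assumes B: "independent B" "finite B" and CD: "C \<subseteq> B" "D \<subseteq> B" "C \<inter> D = {}"
    and x: "x \<in> span C" "x \<in> span D"
  shows "x = 0"
proof -
  have fin: "finite C" "finite D"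
    using finite_subset[OF CD(1) B(2)] finite_subset[OF CD(2) B(2)] by auto
  obtain u where u: "x = (\<Sum>v\<in>C. scale (u v) v)"
    using x(1) span_finite[OF fin(1)] by auto
  obtain w where w: "x = (\<Sum>v\<in>D. scale (w v) v)"
    using x(2) span_finite[OF fin(2)] by auto
  define t where "t v = (if v \<in> C then u v else - w v)" for v
  have "(\<Sum>v\<in>C. scale (t v) v) = x"
    unfolding u t_def by (intro sum.cong) auto
  moreover have "(\<Sum>v\<in>D. scale (t v) v) = - x"
    unfolding w t_def using CD(3) by (auto simp: sum_negf[symmetric] scale_minus_left intro!: sum.cong)
  ultimately have "(\<Sum>v\<in>C \<union> D. scale (t v) v) = x - x"
    using fin CD by (subst sum.union_disjoint) auto
  then have "t v = 0" if "v \<in> C" for v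
    using fin CD that by (intro independentD[OF B(1), of "C \<union> D"]) auto
  then show ?thesis
    unfolding u t_def by simp
qed

lemma (in vector_space) span_subset_of_dim_eq_card:
  assumes "subspace S" "S \<subseteq> span W" "independent W" "finite W" "dim S = card W"
  shows "span W \<subseteq> S"
proof -
  obtain B where B: "B \<subseteq> S" "independent B" "S \<subseteq> span B" "card B = dim S"
    by (rule basis_exists)
  have BW: "B \<subseteq> span W"
    using B(1) assms(2) by (rule order_trans)
  have "W \<subseteq> span B"
  proof
    fix w assume w: "w \<in> W"
    show "w \<in> span B"
    proof (rule ccontr)
      assume nw: "w \<notin> span B"
      have "insert w B \<subseteq> span W"
        using BW span_base[OF w] by simp
      then have "finite (insert w B) \<and> card (insert w B) \<le> card W"
        by (rule independent_span_bound[OF assms(4) independent_insertI[OF nw B(2)]])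
      moreover have "w \<notin> B"
        using nw span_superset by auto
      ultimately show False
        using B(4) assms(5) by auto
    qed
  qed
  then have "span W \<subseteq> span B"
    by (rule span_minimal[OF _ subspace_span])
  also have "\<dots> \<subseteq> S"
    by (rule span_minimal[OF B(1) assms(1)])
  finally show ?thesis .
qed

lemma (in Vector_Spaces.linear) image_subset_span_image_if_zero_on:
  assumes "V \<subseteq> vs1.span (A \<union> C)" "\<And>a. a \<in> A \<Longrightarrow> f a = 0"
  shows "f ` V \<subseteq> vs2.span (f ` C)"
proof
  fix y assume "y \<in> f ` V"
  then obtain v where v: "v \<in> vs1.span (A \<union> C)" "y = f v"
    using assms(1) by blast
  then obtain a c where "v = a + c" "a \<in> vs1.span A" "c \<in> vs1.span C"
    unfolding vs1.span_Un by blast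
  moreover have "f a = 0" if "a \<in> vs1.span A" for a
    using eq_0_on_span[of A a] assms(2) that by blast
  ultimately show "y \<in> vs2.span (f ` C)"
    by (simp add: v(2) add span_image)
qed

lemma (in Vector_Spaces.linear) dim_eq_dim_kernel_add_dim_image:
  assumes V: "vs1.subspace V" "V \<subseteq> vs1.span F" "finite F"
  shows "vs1.dim V = vs1.dim {x\<in>V. f x = 0} + vs2.dim (f ` V)"
proof -
  let ?K = "{x\<in>V. f x = 0}"
  obtain BK where BK: "BK \<subseteq> ?K" "vs1.independent BK" "?K \<subseteq> vs1.span BK" "card BK = vs1.dim ?K"
    by (rule vs1.basis_exists)
  obtain B where B: "BK \<subseteq> B" "B \<subseteq> V" "vs1.independent B" "V \<subseteq> vs1.span B"
    using BK(1,2) vs1.maximal_independent_subset_extend[of BK V] by blast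
  have fin: "finite B"
    using vs1.independent_span_bound[OF V(3) B(3)] B(2) V(2) by blast
  let ?C = "B - BK"
  have "x = 0" if "x \<in> vs1.span ?C" "f x = 0" for x
  proof -
    have "x \<in> ?K"
      using that vs1.span_minimal[of ?C V] B(2) V(1) by blast
    then show ?thesis
      using vs1.span_disjoint_subsets_eq_0[OF B(3) fin, of ?C BK] that(1) BK(3) B(1) by blast
  qed
  then have inj: "inj_on f (vs1.span ?C)"
    by (simp add: inj_on_iff_eq_0)
  have "V \<subseteq> vs1.span (BK \<union> ?C)"
    using B(1,4) by (simp add: Un_absorb1)
  then have "f ` V \<subseteq> vs2.span (f ` ?C)"
    by (rule image_subset_span_image_if_zero_on) (use BK(1) in auto)
  moreover have "vs2.independent (f ` ?C)"
    using independent_injective_image[OF vs1.independent_mono[OF B(3)] inj] by blast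
  ultimately have "vs2.dim (f ` V) = card (f ` ?C)"
    using B(2) by (intro vs2.basis_card_eq_dim[symmetric]) auto
  also have "\<dots> = card B - card BK"
    using fin B(1) card_image[OF inj_on_subset[OF inj vs1.span_superset]] by (simp add: card_Diff_subset finite_subset)
  finally show ?thesis
    using vs1.basis_card_eq_dim[OF B(2,4,3)] BK(4) card_mono[OF fin B(1)] by linarith
qed

lemma (in Vector_Spaces.linear) dim_image_eq_of_inj:
  assumes "inj f"
  shows "vs2.dim (f ` V) = vs1.dim V"
proof -
  obtain B where B: "B \<subseteq> V" "vs1.independent B" "V \<subseteq> vs1.span B" "card B = vs1.dim V"
    by (rule vs1.basis_exists)
  have "vs2.dim (f ` V) = card (f ` B)"
    using B by (intro vs2.basis_card_eq_dim[symmetric] independent_inj_image assms spans_image) auto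
  then show ?thesis
    using assms B(4) by (simp add: card_image inj_on_subset)
qed

interpretation fun_space: vector_space "\<lambda>c (u :: 'x \<Rightarrow> 'a::field) x. c * u x"
  by unfold_locales (auto simp: fun_eq_iff algebra_simps)

lemma sum_fun_apply: "(\<Sum>i\<in>I. F i) x = (\<Sum>i\<in>I. F i x :: 'b::comm_monoid_add)"
  by (induct I rule: infinite_finite_induct) auto

lemma fun_space_span_indicators:
  assumes "finite X" "\<And>x. x \<notin> X \<Longrightarrow> u x = 0"
  shows "u \<in> fun_space.span ((\<lambda>q. indicator {q}) ` X :: ('x \<Rightarrow> 'a::field) set)"
proof -
  have "(\<Sum>q\<in>X. u q * indicator {q} x) = u x" for x
  proof (cases "x \<in> X")
    case True
    have "(\<Sum>q\<in>X. u q * indicator {q} x) = (\<Sum>q\<in>X. if q = x then u q else 0)"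
      by (intro sum.cong) (auto simp: indicator_def)
    with True assms(1) show ?thesis
      by simp
  next
    case False
    then show ?thesis
      using assms(2) by (auto simp: indicator_def intro: sum.neutral)
  qed
  then have "u = (\<Sum>q\<in>X. (\<lambda>x. u q * indicator {q} x))"
    by (simp add: fun_eq_iff sum_fun_apply)
  also have "\<dots> \<in> fun_space.span ((\<lambda>q. indicator {q}) ` X)"
    by (intro fun_space.span_sum fun_space.span_scale fun_space.span_base) auto
  finally show ?thesis .
qed

lemma inj_indicator_singleton: "inj (\<lambda>q. indicator {q} :: 'x \<Rightarrow> 'a::zero_neq_one)"
proof (rule injI)
  fix a b :: 'x
  assume "(indicator {a} :: 'x \<Rightarrow> 'a) = indicator {b}"
  then have "(indicator {a} :: 'x \<Rightarrow> 'a) a = indicator {b} a"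
    by simp
  then show "a = b"
    by (auto simp: indicator_def split: if_splits)
qed

lemma fun_space_independent_indicators:
  assumes "finite X"
  shows "fun_space.independent ((\<lambda>q. indicator {q}) ` X :: ('x \<Rightarrow> 'a::field) set)"
proof (rule fun_space.independent_if_scalars_zero)
  fix c :: "('x \<Rightarrow> 'a) \<Rightarrow> 'a" and e :: "'x \<Rightarrow> 'a"
  assume zero: "(\<Sum>e\<in>(\<lambda>q. indicator {q}) ` X. (\<lambda>x. c e * e x)) = 0" and "e \<in> (\<lambda>q. indicator {q}) ` X"
  then obtain q where q: "q \<in> X" "e = indicator {q}"
    by auto
  have "0 = (\<Sum>e\<in>(\<lambda>q. indicator {q}) ` X. c e * e q)"
    using fun_cong[OF zero, of q] by (simp add: sum_fun_apply)
  also have "\<dots> = (\<Sum>p\<in>X. c (indicator {p}) * indicator {p} q)"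
    by (subst sum.reindex[OF inj_on_subset[OF inj_indicator_singleton subset_UNIV]]) simp
  also have "\<dots> = c e"
    using assms q by (simp add: indicator_def if_distrib sum.delta cong: if_cong)
  finally show "c e = 0" ..
qed (use assms in simp)

section \<open>Polynomial arithmetic\<close>

lemma poly_mapping_eq_sum_single:
  "f = (\<Sum>m\<in>Poly_Mapping.keys f. Poly_Mapping.single m (Poly_Mapping.lookup f m))"
proof (rule poly_mapping_eqI)
  fix k
  show "Poly_Mapping.lookup f k =
      Poly_Mapping.lookup (\<Sum>m\<in>Poly_Mapping.keys f. Poly_Mapping.single m (Poly_Mapping.lookup f m)) k"
    by (cases "k \<in> Poly_Mapping.keys f") (auto simp: lookup_sum lookup_single when_def in_keys_iff)
qed

lemma poly_mapping_induct [case_names zero single add]: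
  fixes f :: "'a \<Rightarrow>\<^sub>0 'b::comm_monoid_add"
  assumes "P 0" and "\<And>m c. P (Poly_Mapping.single m c)" and "\<And>f g. P f \<Longrightarrow> P g \<Longrightarrow> P (f + g)"
  shows "P f"
proof -
  have "P (\<Sum>m\<in>S. Poly_Mapping.single m (Poly_Mapping.lookup f m))" if "finite S" for S
    using that by (induct S rule: finite_induct) (auto intro: assms)
  then show ?thesis
    by (metis finite_keys poly_mapping_eq_sum_single)
qed

definition pm_extend :: "('a::zero \<Rightarrow> 'b::comm_semiring_1) \<Rightarrow> ('m \<Rightarrow> 'b) \<Rightarrow> ('m \<Rightarrow>\<^sub>0 'a) \<Rightarrow> 'b"
  where "pm_extend \<phi> M f = (\<Sum>m\<in>Poly_Mapping.keys f. \<phi> (Poly_Mapping.lookup f m) * M m)"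

lemma pm_extend_superset:
  assumes "finite S" "Poly_Mapping.keys f \<subseteq> S" "\<phi> 0 = 0"
  shows "pm_extend \<phi> M f = (\<Sum>m\<in>S. \<phi> (Poly_Mapping.lookup f m) * M m)"
  unfolding pm_extend_def using assms
  by (intro sum.mono_neutral_left) (auto simp: in_keys_iff)

lemma pm_extend_zero [simp]: "pm_extend \<phi> M 0 = 0"
  by (simp add: pm_extend_def)

lemma pm_extend_single:
  "\<phi> 0 = 0 \<Longrightarrow> pm_extend \<phi> M (Poly_Mapping.single m c) = \<phi> c * M m"
  by (cases "c = 0") (auto simp: pm_extend_def)

lemma pm_extend_add:
  assumes "\<phi> 0 = 0" "\<And>a b. \<phi> (a + b) = \<phi> a + \<phi> b"
  shows "pm_extend \<phi> M (f + g) = pm_extend \<phi> M f + pm_extend \<phi> M g"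
proof -
  let ?S = "Poly_Mapping.keys f \<union> Poly_Mapping.keys g"
  have "pm_extend \<phi> M (f + g) = (\<Sum>m\<in>?S. \<phi> (Poly_Mapping.lookup (f + g) m) * M m)"
    using keys_add[of f g] assms(1) by (intro pm_extend_superset) auto
  also have "\<dots> = (\<Sum>m\<in>?S. \<phi> (Poly_Mapping.lookup f m) * M m) + (\<Sum>m\<in>?S. \<phi> (Poly_Mapping.lookup g m) * M m)"
    by (simp add: lookup_add assms(2) distrib_right sum.distrib)
  also have "\<dots> = pm_extend \<phi> M f + pm_extend \<phi> M g"
    using assms(1) by (subst (1 2) pm_extend_superset[where S = ?S]) auto
  finally show ?thesis .
qed

lemma pm_extend_sum:
  assumes "\<phi> 0 = 0" "\<And>a b. \<phi> (a + b) = \<phi> a + \<phi> b"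
  shows "pm_extend \<phi> M (\<Sum>i\<in>I. F i) = (\<Sum>i\<in>I. pm_extend \<phi> M (F i))"
  by (induct I rule: infinite_finite_induct) (auto simp: pm_extend_add[OF assms])

lemma pm_extend_mult:
  fixes f g :: "'m::monoid_add \<Rightarrow>\<^sub>0 'a::semiring_0"
  assumes "\<phi> 0 = 0" "\<And>a b. \<phi> (a + b) = \<phi> a + \<phi> b" "\<And>a b. \<phi> (a * b) = \<phi> a * \<phi> b"
    and "\<And>a b. M (a + b) = M a * M b"
  shows "pm_extend \<phi> M (f * g) = pm_extend \<phi> M f * pm_extend \<phi> M g"
proof (induct f rule: poly_mapping_induct)
  case (single m c)
  show ?case
    by (induct g rule: poly_mapping_induct)
      (simp_all add: mult_single pm_extend_single pm_extend_add assms distrib_left mult_ac)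
qed (simp_all add: distrib_right pm_extend_add[OF assms(1,2)])

lemma pm_extend_diff:
  fixes f g :: "'m \<Rightarrow>\<^sub>0 'a::ab_group_add" and M :: "'m \<Rightarrow> 'b::comm_ring_1"
  assumes "\<phi> 0 = 0" "\<And>a b. \<phi> (a + b) = \<phi> a + \<phi> b"
  shows "pm_extend \<phi> M (f - g) = pm_extend \<phi> M f - pm_extend \<phi> M g"
  using pm_extend_add[OF assms, of M "f - g" g] by (simp add: algebra_simps)

definition mpow :: "('n::finite \<Rightarrow> 'b::comm_semiring_1) \<Rightarrow> ('n \<Rightarrow>\<^sub>0 nat) \<Rightarrow> 'b"
  where "mpow x m = (\<Prod>i\<in>UNIV. x i ^ Poly_Mapping.lookup m i)"

lemma mpow_add: "mpow x (a + b) = mpow x a * mpow x b"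
  by (simp add: mpow_def lookup_add power_add prod.distrib)

lemma mpow_zero [simp]: "mpow x 0 = 1"
  by (simp add: mpow_def)

lemma mpow_single_one [simp]: "mpow x (Poly_Mapping.single i (Suc 0)) = x i"
proof -
  have "mpow x (Poly_Mapping.single i (Suc 0)) = (\<Prod>j\<in>UNIV. if j = i then x i else 1)"
    unfolding mpow_def by (intro prod.cong) (auto simp: lookup_single when_def)
  then show ?thesis by simp
qed

lemma mpow_zero_vec: "mpow (\<lambda>i. (0::'b::comm_semiring_1^'n) $ i) m = (if m = 0 then 1 else 0)"
proof (cases "m = 0")
  case False
  then obtain i where "Poly_Mapping.lookup m i \<noteq> 0"
    by (metis lookup_zero poly_mapping_eqI)
  then have "mpow (\<lambda>i. (0::'b^'n) $ i) m = 0"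
    unfolding mpow_def by (intro prod_zero bexI[of _ i]) (auto simp: zero_power)
  with False show ?thesis by simp
qed simp

lemma Const_add: "Const (a + b) = Const a + Const b"
  by (simp add: Const_def single_add)
lemma Const_mult: "Const (a * b) = Const a * Const b"
  by (simp add: Const_def mult_single)
lemma Const_zero [simp]: "Const 0 = 0"
  by (simp add: Const_def)
lemma Const_one [simp]: "Const 1 = 1"
  by (simp add: Const_def)
lemma Const_sum: "Const (\<Sum>i\<in>I. f i) = (\<Sum>i\<in>I. Const (f i))"
  by (induct I rule: infinite_finite_induct) (auto simp: Const_add)
lemma smul_eq_Const_mult: "smul c f = Const c * f"
  by (simp add: smul_def Const_def mult_map_scale_conv_mult)

lemma peval_eq_pm_extend: "peval f v = pm_extend (\<lambda>a. a) (mpow (\<lambda>i. v $ i)) f"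
  by (simp add: peval_def pm_extend_def mpow_def)

lemma peval_add: "peval (f + g) v = peval f v + peval g v"
  unfolding peval_eq_pm_extend by (rule pm_extend_add) auto
lemma peval_zero [simp]: "peval 0 v = 0"
  unfolding peval_eq_pm_extend by simp
lemma peval_single: "peval (Poly_Mapping.single m c) v = c * mpow (\<lambda>i. v $ i) m"
  unfolding peval_eq_pm_extend by (rule pm_extend_single) auto
lemma peval_mult: "peval (f * g) v = peval f v * peval g v"
  unfolding peval_eq_pm_extend by (rule pm_extend_mult) (auto simp: mpow_add)
lemma peval_sum: "peval (\<Sum>i\<in>I. F i) v = (\<Sum>i\<in>I. peval (F i) v)"
  unfolding peval_eq_pm_extend by (rule pm_extend_sum) auto
lemma peval_diff: "peval (f - g :: ('n::finite, 'a::comm_ring_1) mpoly) v = peval f v - peval g v"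
  unfolding peval_eq_pm_extend by (rule pm_extend_diff) auto
lemma peval_Const [simp]: "peval (Const c) v = c"
  by (simp add: Const_def peval_single)
lemma peval_one [simp]: "peval 1 v = 1"
  by (metis Const_one peval_Const)
lemma peval_prod: "peval (\<Prod>i\<in>I. F i) v = (\<Prod>i\<in>I. peval (F i) v)"
  by (induct I rule: infinite_finite_induct) (simp_all add: peval_mult)
lemma peval_Var [simp]: "peval (Var i) v = v $ i"
  by (simp add: Var_def peval_single)
lemma peval_power: "peval (f ^ k) v = peval f v ^ k"
  by (induct k) (simp_all add: peval_mult)
lemma peval_smul: "peval (smul c f) v = c * peval f v"
  by (simp add: smul_eq_Const_mult peval_mult)

lemma peval_at_zero: "peval f 0 = Poly_Mapping.lookup f 0"
proof -
  have "peval f 0 = (\<Sum>m\<in>Poly_Mapping.keys f. if m = 0 then Poly_Mapping.lookup f m else 0)"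
    unfolding peval_eq_pm_extend pm_extend_def mpow_zero_vec by (intro sum.cong) simp_all
  then show ?thesis by (simp add: in_keys_iff)
qed

lemma lookup_mult_zero:
  "Poly_Mapping.lookup (f * g) 0 = Poly_Mapping.lookup f 0 * Poly_Mapping.lookup (g :: ('n::finite, 'a::comm_semiring_1) mpoly) 0"
  by (simp flip: peval_at_zero add: peval_mult)

lemma psubst_eq_pm_extend: "psubst \<sigma> f = pm_extend Const (mpow \<sigma>) f"
  by (simp add: psubst_def pm_extend_def mpow_def)

lemma psubst_add: "psubst \<sigma> (f + g) = psubst \<sigma> f + psubst \<sigma> g"
  unfolding psubst_eq_pm_extend by (rule pm_extend_add) (auto simp: Const_add)
lemma psubst_zero [simp]: "psubst \<sigma> 0 = 0"
  unfolding psubst_eq_pm_extend by simp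
lemma psubst_single: "psubst \<sigma> (Poly_Mapping.single m c) = Const c * mpow \<sigma> m"
  unfolding psubst_eq_pm_extend by (rule pm_extend_single) simp
lemma psubst_mult: "psubst \<sigma> (f * g) = psubst \<sigma> f * psubst \<sigma> g"
  unfolding psubst_eq_pm_extend by (rule pm_extend_mult) (auto simp: mpow_add Const_add Const_mult)
lemma psubst_sum: "psubst \<sigma> (\<Sum>i\<in>I. F i) = (\<Sum>i\<in>I. psubst \<sigma> (F i))"
  unfolding psubst_eq_pm_extend by (rule pm_extend_sum) (auto simp: Const_add)
lemma psubst_diff: "psubst \<sigma> (f - g :: ('n::finite, 'a::comm_ring_1) mpoly) = psubst \<sigma> f - psubst \<sigma> g"
  unfolding psubst_eq_pm_extend by (rule pm_extend_diff) (auto simp: Const_add)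
lemma psubst_Const [simp]: "psubst \<sigma> (Const c) = Const c"
  by (simp add: Const_def psubst_single)
lemma psubst_one [simp]: "psubst \<sigma> 1 = 1"
  by (metis Const_one psubst_Const)
lemma psubst_Var [simp]: "psubst \<sigma> (Var i) = \<sigma> i"
  by (simp add: Var_def psubst_single)
lemma psubst_power: "psubst \<sigma> (f ^ k) = psubst \<sigma> f ^ k"
  by (induct k) (simp_all add: psubst_mult)
lemma psubst_prod: "psubst \<sigma> (\<Prod>i\<in>I. F i) = (\<Prod>i\<in>I. psubst \<sigma> (F i))"
  by (induct I rule: infinite_finite_induct) (simp_all add: psubst_mult)
lemma psubst_smul: "psubst \<sigma> (smul c f) = smul c (psubst \<sigma> f)"
  by (simp add: smul_eq_Const_mult psubst_mult)

lemma peval_psubst: "peval (psubst \<sigma> f) v = peval f (\<chi> i. peval (\<sigma> i) v)"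
  by (induct f rule: poly_mapping_induct)
    (simp_all add: psubst_single psubst_add peval_add peval_mult peval_single mpow_def peval_prod peval_power)

lemma psubst_psubst: "psubst \<tau> (psubst \<sigma> f) = psubst (\<lambda>i. psubst \<tau> (\<sigma> i)) f"
  by (induct f rule: poly_mapping_induct)
    (simp_all add: psubst_single psubst_add psubst_mult mpow_def psubst_prod psubst_power)

lemma mpow_Var: "mpow Var m = Poly_Mapping.single m (1::'a::comm_semiring_1)"
proof -
  have Var_power: "Var i ^ k = Poly_Mapping.single (Poly_Mapping.single i k) (1::'a)" for i k
    by (induct k) (auto simp: Var_def mult_single single_add[symmetric] mult.commute)
  have prod_single: "(\<Prod>i\<in>I. Poly_Mapping.single (g i) (1::'a)) = Poly_Mapping.single (\<Sum>i\<in>I. g i) 1"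
    if "finite I" for I and g :: "'n \<Rightarrow> 'n \<Rightarrow>\<^sub>0 nat"
    using that by (induct I rule: finite_induct) (auto simp: mult_single)
  have "(\<Sum>i\<in>UNIV. Poly_Mapping.single i (Poly_Mapping.lookup m i)) = m"
    by (rule poly_mapping_eqI) (simp add: lookup_sum lookup_single when_def)
  then show ?thesis
    unfolding mpow_def Var_power by (simp add: prod_single)
qed

lemma psubst_Var_id: "psubst Var f = (f :: ('n::finite, 'a::comm_semiring_1) mpoly)"
  by (induct f rule: poly_mapping_induct)
    (simp_all add: psubst_single psubst_add mpow_Var Const_def mult_single)

section \<open>Degrees and homogeneous components\<close>

lemma mdeg_add: "mdeg (a + b) = mdeg a + mdeg b"
  by (simp add: mdeg_def lookup_add sum.distrib)

lemma mdeg_single: "mdeg (Poly_Mapping.single (i::'n::finite) k) = k"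
proof -
  have "mdeg (Poly_Mapping.single i k) = (\<Sum>j\<in>UNIV. if j = i then k else 0)"
    unfolding mdeg_def by (intro sum.cong) (auto simp: lookup_single when_def)
  then show ?thesis by simp
qed

lemma mdeg_eq_0_iff: "mdeg (m::'n::finite \<Rightarrow>\<^sub>0 nat) = 0 \<longleftrightarrow> m = 0"
  by (auto simp: mdeg_def intro: poly_mapping_eqI)

lemma finite_mdeg_eq: "finite {m :: 'n::finite \<Rightarrow>\<^sub>0 nat. mdeg m = r}"
proof -
  have "Poly_Mapping.lookup ` {m. mdeg m = r} \<subseteq> PiE UNIV (\<lambda>_. {..r})"
    unfolding mdeg_def by (auto intro: member_le_sum)
  then have "finite (Poly_Mapping.lookup ` {m :: 'n \<Rightarrow>\<^sub>0 nat. mdeg m = r})"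
    by (rule finite_subset) (intro finite_PiE; simp)
  moreover have "inj_on Poly_Mapping.lookup {m :: 'n \<Rightarrow>\<^sub>0 nat. mdeg m = r}"
    by (intro inj_onI poly_mapping_eqI) simp
  ultimately show ?thesis
    by (rule finite_imageD)
qed

lemma Pdeg_iff: "f \<in> Pdeg d \<longleftrightarrow> (\<forall>m. Poly_Mapping.lookup f m \<noteq> 0 \<longrightarrow> mdeg m = d)"
  by (auto simp: Pdeg_def in_keys_iff)

lemma Pdeg_zero [simp]: "0 \<in> Pdeg d"
  by (simp add: Pdeg_def)
lemma Pdeg_add: "f \<in> Pdeg d \<Longrightarrow> g \<in> Pdeg d \<Longrightarrow> f + g \<in> Pdeg d"
  using keys_add[of f g] by (auto simp: Pdeg_def)
lemma Pdeg_diff: "(f::('n::finite,'a::ab_group_add) mpoly) \<in> Pdeg d \<Longrightarrow> g \<in> Pdeg d \<Longrightarrow> f - g \<in> Pdeg d"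
  using keys_diff[of f g] by (auto simp: Pdeg_def)
lemma Pdeg_sum: "(\<And>i. i \<in> I \<Longrightarrow> F i \<in> Pdeg d) \<Longrightarrow> (\<Sum>i\<in>I. F i) \<in> Pdeg d"
  by (induct I rule: infinite_finite_induct) (auto intro: Pdeg_add)
lemma Pdeg_single: "Poly_Mapping.single m c \<in> Pdeg (mdeg m)"
  by (auto simp: Pdeg_iff lookup_single when_def)
lemma Pdeg_Const: "Const c \<in> Pdeg 0"
  using Pdeg_single[of 0 c] by (simp add: Const_def mdeg_def)
lemma Pdeg_Var: "(Var i :: ('n::finite,'a::zero_neq_one) mpoly) \<in> Pdeg 1"
  using Pdeg_single[of "Poly_Mapping.single i 1" "1::'a"] by (simp add: Var_def mdeg_single)
lemma Pdeg_mult: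
  "(f::('n::finite,'a::semiring_0) mpoly) \<in> Pdeg a \<Longrightarrow> g \<in> Pdeg b \<Longrightarrow> f * g \<in> Pdeg (a + b)"
  using keys_mult[of f g] by (auto simp: Pdeg_def mdeg_add)
lemma Pdeg_Const_mult: "(f::('n::finite,'a::comm_semiring_1) mpoly) \<in> Pdeg d \<Longrightarrow> Const c * f \<in> Pdeg d"
  using Pdeg_mult[OF Pdeg_Const] by simp
lemma Pdeg_smul: "(f::('n::finite,'a::comm_semiring_1) mpoly) \<in> Pdeg d \<Longrightarrow> smul c f \<in> Pdeg d"
  by (simp add: smul_eq_Const_mult Pdeg_Const_mult)
lemma Pdeg_one: "(1::('n::finite,'a::comm_semiring_1) mpoly) \<in> Pdeg 0"
  by (metis Const_one Pdeg_Const)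
lemma Pdeg_prod:
  "(\<And>i. i \<in> I \<Longrightarrow> F i \<in> Pdeg (e i)) \<Longrightarrow>
     (\<Prod>i\<in>I. F i :: ('n::finite,'a::comm_semiring_1) mpoly) \<in> Pdeg (\<Sum>i\<in>I. e i)"
  by (induct I rule: infinite_finite_induct) (auto intro: Pdeg_mult Pdeg_one)
lemma Pdeg_power: "(f::('n::finite,'a::comm_semiring_1) mpoly) \<in> Pdeg d \<Longrightarrow> f ^ k \<in> Pdeg (k * d)"
  using Pdeg_prod[of "{..<k}" "\<lambda>_. f" "\<lambda>_. d"] by simp

lemma Pdeg_psubst:
  assumes "\<And>i. \<sigma> i \<in> Pdeg 1" and "f \<in> Pdeg d"
  shows "psubst \<sigma> (f::('n::finite,'a::comm_semiring_1) mpoly) \<in> Pdeg d"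
proof -
  have "\<sigma> i ^ k \<in> Pdeg k" for i k
    using Pdeg_power[OF assms(1)] by simp
  then have "mpow \<sigma> m \<in> Pdeg (mdeg m)" for m
    unfolding mpow_def mdeg_def by (intro Pdeg_prod)
  moreover have "mdeg m = d" if "m \<in> Poly_Mapping.keys f" for m
    using assms(2) that by (simp add: Pdeg_def)
  ultimately have "Const (Poly_Mapping.lookup f m) * mpow \<sigma> m \<in> Pdeg d" if "m \<in> Poly_Mapping.keys f" for m
    using that by (metis Pdeg_Const_mult)
  then have "(\<Sum>m\<in>Poly_Mapping.keys f. psubst \<sigma> (Poly_Mapping.single m (Poly_Mapping.lookup f m))) \<in> Pdeg d"
    by (auto simp: psubst_single intro: Pdeg_sum)
  then show ?thesis
    by (metis poly_mapping_eq_sum_single psubst_sum)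
qed

lemma peval_homogeneous:
  assumes "f \<in> Pdeg d"
  shows "peval f (c *s v) = c ^ d * peval f v"
proof -
  have *: "mpow (($) (c *s v)) m = c ^ d * mpow (($) v) m" if "m \<in> Poly_Mapping.keys f" for m
    using assms that unfolding mpow_def
    by (auto simp: Pdeg_def mdeg_def power_mult_distrib prod.distrib power_sum)
  have "peval f (c *s v) = (\<Sum>m\<in>Poly_Mapping.keys f. Poly_Mapping.lookup f m * (c ^ d * mpow (($) v) m))"
    unfolding peval_eq_pm_extend pm_extend_def by (intro sum.cong refl) (simp only: *)
  then show ?thesis
    unfolding peval_eq_pm_extend pm_extend_def by (simp add: sum_distrib_left mult_ac)
qed

lemma lookup_hcomp:
  "Poly_Mapping.lookup (hcomp j f) m = (if mdeg m = j then Poly_Mapping.lookup f m else 0)"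
proof -
  have "finite {m. (if mdeg m = j then Poly_Mapping.lookup f m else 0) \<noteq> 0}"
    by (rule finite_subset[of _ "Poly_Mapping.keys f"]) (auto simp: in_keys_iff)
  then show ?thesis by (simp add: hcomp_def)
qed

lemma hcomp_Pdeg: "hcomp j f \<in> Pdeg j"
  by (simp add: Pdeg_iff lookup_hcomp)
lemma hcomp_add: "hcomp j (f + g) = hcomp j f + hcomp j g"
  by (rule poly_mapping_eqI) (simp add: lookup_hcomp lookup_add)
lemma hcomp_zero [simp]: "hcomp j 0 = 0"
  by (rule poly_mapping_eqI) (simp add: lookup_hcomp)
lemma hcomp_diff: "hcomp j (f - g) = hcomp j f - hcomp j (g::('n::finite,'a::ab_group_add) mpoly)"
  by (rule poly_mapping_eqI) (simp add: lookup_hcomp lookup_minus)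
lemma hcomp_sum: "hcomp j (\<Sum>i\<in>I. F i) = (\<Sum>i\<in>I. hcomp j (F i))"
  by (induct I rule: infinite_finite_induct) (auto simp: hcomp_add)
lemma hcomp_Pdeg_eq: "f \<in> Pdeg d \<Longrightarrow> hcomp j f = (if j = d then f else 0)"
  by (rule poly_mapping_eqI) (auto simp: lookup_hcomp Pdeg_iff)
lemma hcomp_zero_eq_Const: "hcomp 0 f = Const (Poly_Mapping.lookup f 0)"
  by (rule poly_mapping_eqI) (auto simp: lookup_hcomp Const_def lookup_single when_def mdeg_eq_0_iff)

lemma hcomp_eq_zero_if_no_key: "j \<notin> mdeg ` Poly_Mapping.keys f \<Longrightarrow> hcomp j f = 0"
  by (rule poly_mapping_eqI) (auto simp: lookup_hcomp in_keys_iff)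

lemma sum_hcomp:
  assumes "finite D" "mdeg ` Poly_Mapping.keys f \<subseteq> D"
  shows "(\<Sum>j\<in>D. hcomp j f) = f"
proof (rule poly_mapping_eqI)
  fix m
  show "Poly_Mapping.lookup (\<Sum>j\<in>D. hcomp j f) m = Poly_Mapping.lookup f m"
    using assms by (cases "m \<in> Poly_Mapping.keys f") (auto simp: lookup_sum lookup_hcomp in_keys_iff)
qed

lemma keys_mdeg_ge_iff_hcomp:
  "(\<forall>m\<in>Poly_Mapping.keys f. N \<le> mdeg m) \<longleftrightarrow> (\<forall>j<N. hcomp j f = 0)"
proof
  assume "\<forall>j<N. hcomp j f = 0"
  then show "\<forall>m\<in>Poly_Mapping.keys f. N \<le> mdeg m"
    by (metis in_keys_iff lookup_hcomp lookup_zero not_le)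
next
  assume "\<forall>m\<in>Poly_Mapping.keys f. N \<le> mdeg m"
  then have "j \<notin> mdeg ` Poly_Mapping.keys f" if "j < N" for j
    using that by force
  then show "\<forall>j<N. hcomp j f = 0"
    by (simp add: hcomp_eq_zero_if_no_key)
qed

lemma hcomp_additive_commute:
  fixes T :: "('n::finite,'a::comm_monoid_add) mpoly \<Rightarrow> ('n,'b::comm_monoid_add) mpoly"
  assumes "\<And>f g. T (f + g) = T f + T g" "T 0 = 0" and "\<And>f d. f \<in> Pdeg d \<Longrightarrow> T f \<in> Pdeg d"
  shows "hcomp j (T f) = T (hcomp j f)"
proof -
  let ?D = "mdeg ` Poly_Mapping.keys f"
  have T_sum: "T (\<Sum>d\<in>D. F d) = (\<Sum>d\<in>D. T (F d))" for D F
    by (induct D rule: infinite_finite_induct) (simp_all add: assms(1,2))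
  have "hcomp j (T f) = (\<Sum>d\<in>?D. hcomp j (T (hcomp d f)))"
    by (metis T_sum finite_imageI finite_keys hcomp_sum order_refl sum_hcomp)
  also have "\<dots> = (\<Sum>d\<in>?D. if j = d then T (hcomp d f) else 0)"
    by (intro sum.cong refl hcomp_Pdeg_eq assms(3) hcomp_Pdeg)
  also have "\<dots> = T (hcomp j f)"
    using hcomp_eq_zero_if_no_key[of j f] assms(2) by auto
  finally show ?thesis .
qed

lemma hcomp_mult:
  fixes f g :: "('n::finite,'a::comm_semiring_1) mpoly"
  assumes "finite D" "mdeg ` Poly_Mapping.keys f \<subseteq> D" "mdeg ` Poly_Mapping.keys g \<subseteq> D"
  shows "hcomp j (f * g) = (\<Sum>a\<in>D. \<Sum>b\<in>D. if j = a + b then hcomp a f * hcomp b g else 0)"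
proof -
  have "f * g = (\<Sum>a\<in>D. \<Sum>b\<in>D. hcomp a f * hcomp b g)"
    by (metis assms sum_hcomp sum_product)
  then show ?thesis
    by (simp add: hcomp_sum hcomp_Pdeg_eq[OF Pdeg_mult[OF hcomp_Pdeg hcomp_Pdeg]] if_distrib cong: if_cong)
qed

lemma hcomp_mult_Pdeg:
  fixes h g :: "('n::finite,'a::comm_semiring_1) mpoly"
  assumes g: "g \<in> Pdeg d"
  shows "hcomp d (h * g) = Const (Poly_Mapping.lookup h 0) * g"
proof -
  let ?D = "insert 0 (insert d (mdeg ` Poly_Mapping.keys h \<union> mdeg ` Poly_Mapping.keys g))"
  have "hcomp d (h * g) = (\<Sum>a\<in>?D. \<Sum>b\<in>?D. if d = a + b then hcomp a h * hcomp b g else 0)"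
    by (rule hcomp_mult) auto
  also have "\<dots> = (\<Sum>a\<in>?D. \<Sum>b\<in>?D. if b = d then (if a = 0 then hcomp a h * g else 0) else 0)"
    by (intro sum.cong refl) (auto simp: hcomp_Pdeg_eq[OF g])
  also have "\<dots> = hcomp 0 h * g"
    by (simp add: sum.delta)
  finally show ?thesis
    by (simp add: hcomp_zero_eq_Const)
qed

section \<open>Linear changes of coordinates\<close>

definition coord_change :: "'a::field^'n^'n \<Rightarrow> ('n::finite, 'a) mpoly \<Rightarrow> ('n, 'a) mpoly"
  where "coord_change B = psubst (\<lambda>i. \<Sum>j\<in>UNIV. Const (B $ i $ j) * Var j)"

lemma lamA_eq_coord_change: "lamA A = coord_change (matrix_inv A)"
  by (simp add: lamA_def coord_change_def fun_eq_iff)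

lemma peval_coord_change: "peval (coord_change B f) v = peval f (B *v v)"
  by (simp add: coord_change_def peval_psubst peval_sum peval_mult matrix_vector_mult_def)

lemma coord_change_coord_change: "coord_change B (coord_change C f) = coord_change (C ** B) f"
proof -
  have "psubst (\<lambda>k. \<Sum>l\<in>UNIV. Const (B $ k $ l) * Var l) (\<Sum>j\<in>UNIV. Const (C $ i $ j) * Var j)
      = (\<Sum>j\<in>UNIV. \<Sum>l\<in>UNIV. Const (C $ i $ j * B $ j $ l) * Var l)" for i
    by (simp add: psubst_sum psubst_mult sum_distrib_left Const_mult mult_ac)
  also have "\<dots> i = (\<Sum>l\<in>UNIV. Const ((C ** B) $ i $ l) * Var l)" for i
    by (subst sum.swap) (simp add: matrix_matrix_mult_def Const_sum sum_distrib_right)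
  finally show ?thesis
    by (simp add: coord_change_def psubst_psubst)
qed

lemma coord_change_mat_1: "coord_change (mat 1) (f :: ('n::finite, 'a::field) mpoly) = f"
proof -
  have "(\<Sum>j\<in>UNIV. Const (mat 1 $ i $ j) * Var j) = (\<Sum>j\<in>UNIV. if i = j then Var j else (0 :: ('n, 'a) mpoly))" for i
    by (intro sum.cong) (auto simp: mat_def)
  then have "(\<lambda>i. \<Sum>j\<in>UNIV. Const (mat 1 $ i $ j) * Var j) = (Var :: 'n \<Rightarrow> ('n, 'a) mpoly)"
    by simp
  then show ?thesis
    by (simp add: coord_change_def psubst_Var_id)
qed

lemma coord_change_add: "coord_change B (f + g) = coord_change B f + coord_change B g"
  by (simp add: coord_change_def psubst_add)
lemma coord_change_diff: "coord_change B (f - g) = coord_change B f - coord_change B g"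
  by (simp add: coord_change_def psubst_diff)
lemma coord_change_mult: "coord_change B (f * g) = coord_change B f * coord_change B g"
  by (simp add: coord_change_def psubst_mult)
lemma coord_change_zero [simp]: "coord_change B 0 = 0"
  by (simp add: coord_change_def)
lemma coord_change_Pdeg: "f \<in> Pdeg d \<Longrightarrow> coord_change B f \<in> Pdeg d"
  unfolding coord_change_def by (rule Pdeg_psubst) (intro Pdeg_sum Pdeg_Const_mult Pdeg_Var)

lemma hcomp_coord_change: "hcomp j (coord_change B f) = coord_change B (hcomp j f)"
  by (rule hcomp_additive_commute) (simp_all add: coord_change_add coord_change_Pdeg)

lemma matrix_mul_matrix_inv:
  assumes "invertible A"
  shows "A ** matrix_inv A = mat 1" "matrix_inv A ** A = mat 1"
proof -
  have "A ** matrix_inv A = mat 1 \<and> matrix_inv A ** A = mat 1"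
    using assms unfolding invertible_def matrix_inv_def by (rule someI_ex)
  then show "A ** matrix_inv A = mat 1" "matrix_inv A ** A = mat 1"
    by auto
qed

lemma lamA_coord_change: "invertible A \<Longrightarrow> lamA A (coord_change A f) = f"
  by (simp add: lamA_eq_coord_change coord_change_coord_change matrix_mul_matrix_inv coord_change_mat_1)
lemma coord_change_lamA: "invertible A \<Longrightarrow> coord_change A (lamA A f) = f"
  by (simp add: lamA_eq_coord_change coord_change_coord_change matrix_mul_matrix_inv coord_change_mat_1)

lemma lamA_add: "lamA A (f + g) = lamA A f + lamA A g"
  by (simp add: lamA_eq_coord_change coord_change_add)
lemma lamA_diff: "lamA A (f - g) = lamA A f - lamA A g"
  by (simp add: lamA_eq_coord_change coord_change_diff)
lemma lamA_mult: "lamA A (f * g) = lamA A f * lamA A g"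
  by (simp add: lamA_eq_coord_change coord_change_mult)
lemma lamA_zero [simp]: "lamA A 0 = 0"
  by (simp add: lamA_def)
lemma lamA_sum: "lamA A (\<Sum>i\<in>I. F i) = (\<Sum>i\<in>I. lamA A (F i))"
  by (simp add: lamA_def psubst_sum)
lemma lamA_smul: "lamA A (smul c f) = smul c (lamA A f)"
  by (simp add: lamA_def psubst_smul)
lemma lamA_Pdeg: "f \<in> Pdeg d \<Longrightarrow> lamA A f \<in> Pdeg d"
  by (simp add: lamA_eq_coord_change coord_change_Pdeg)
lemma hcomp_lamA: "hcomp j (lamA A f) = lamA A (hcomp j f)"
  by (simp add: lamA_eq_coord_change hcomp_coord_change)

lemma peval_lamA_matrix_vector_mult: "invertible A \<Longrightarrow> peval (lamA A f) (A *v v) = peval f v"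
  by (simp add: lamA_eq_coord_change peval_coord_change matrix_vector_mul_assoc matrix_mul_matrix_inv)

lemma inj_lamA: "invertible A \<Longrightarrow> inj (lamA A)"
  by (metis coord_change_lamA injI)

section \<open>Projective points and normalized representatives\<close>

definition normalizable :: "('n::finite, 'a::field) mpoly \<Rightarrow> ('a^'n) set \<Rightarrow> bool"
  where "normalizable L p \<longleftrightarrow> is_ppoint p \<and> L \<in> Pdeg 1 \<and> (\<forall>v\<in>p. peval L v \<noteq> 0)"

lemma proj_pt_mem: "v \<in> proj_pt v"
  unfolding proj_pt_def by (rule CollectI, rule exI[of _ 1]) simp

lemma proj_pt_scale: "c \<noteq> 0 \<Longrightarrow> proj_pt (c *s v) = proj_pt (v :: 'a::field^'n)"
  unfolding proj_pt_def
proof (intro set_eqI iffI)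
  fix x assume "x \<in> {d *s (c *s v) |d. d \<noteq> 0}" "c \<noteq> 0"
  then obtain d where "d \<noteq> 0" "x = (d * c) *s v"
    by auto
  with \<open>c \<noteq> 0\<close> show "x \<in> {d *s v |d. d \<noteq> 0}"
    by auto
next
  fix x assume "x \<in> {d *s v |d. d \<noteq> 0}" "c \<noteq> 0"
  then obtain d where "x = (d / c) *s (c *s v)" "d / c \<noteq> 0"
    by auto
  then show "x \<in> {d *s (c *s v) |d. d \<noteq> 0}"
    by blast
qed

lemma is_ppoint_eq_proj_pt:
  assumes "is_ppoint p" "w \<in> p"
  shows "p = proj_pt w"
proof -
  obtain v c where "p = proj_pt v" "c \<noteq> 0" "w = c *s v"
    using assms by (auto simp: is_ppoint_def proj_pt_def)
  then show ?thesis
    by (simp add: proj_pt_scale)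
qed

lemma LamA_proj_pt: "LamA A (proj_pt v) = proj_pt (A *v v)"
  unfolding LamA_def proj_pt_def
proof (intro set_eqI iffI)
  fix x assume "x \<in> (*v) A ` {c *s v |c. c \<noteq> 0}"
  then show "x \<in> {c *s (A *v v) |c. c \<noteq> 0}"
    by (auto simp: vector_scalar_commute)
next
  fix x assume "x \<in> {c *s (A *v v) |c. c \<noteq> 0}"
  then obtain c where "c \<noteq> 0" "x = A *v (c *s v)"
    by (auto simp: vector_scalar_commute)
  then show "x \<in> (*v) A ` {c *s v |c. c \<noteq> 0}"
    by blast
qed

lemma is_ppoint_LamA:
  assumes "invertible A" "is_ppoint p"
  shows "is_ppoint (LamA A p)"
proof -
  obtain v where v: "v \<noteq> 0" "p = proj_pt v"
    using assms(2) by (auto simp: is_ppoint_def)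
  have "matrix_inv A *v (A *v v) = v"
    using assms(1) by (simp add: matrix_vector_mul_assoc matrix_mul_matrix_inv)
  with v have "A *v v \<noteq> 0"
    by auto
  with v show ?thesis
    by (auto simp: is_ppoint_def LamA_proj_pt)
qed

lemma inj_LamA:
  assumes "invertible A"
  shows "inj (LamA A)"
proof (rule injI)
  fix p q assume "LamA A p = LamA A q"
  then have "(*v) (matrix_inv A) ` LamA A p = (*v) (matrix_inv A) ` LamA A q"
    by simp
  then show "p = q"
    using assms by (simp add: LamA_def image_image matrix_vector_mul_assoc matrix_mul_matrix_inv)
qed

context
  fixes L :: "('n::finite, 'a::field) mpoly" and p :: "('a^'n) set"
  assumes p: "normalizable L p"
begin

lemma nrep_unique: "w \<in> p \<and> peval L w = 1 \<longleftrightarrow> w = nrep L p"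
proof -
  obtain v where v: "v \<noteq> 0" "p = proj_pt v"
    using p by (auto simp: normalizable_def is_ppoint_def)
  have hom: "peval L (c *s w) = c * peval L w" for c w
    using p peval_homogeneous[of L 1] by (simp add: normalizable_def)
  have a: "peval L v \<noteq> 0"
    using p v proj_pt_mem[of v] by (auto simp: normalizable_def)
  have eq: "w \<in> p \<and> peval L w = 1 \<longleftrightarrow> w = inverse (peval L v) *s v" for w
    using v a by (auto simp: proj_pt_def hom field_simps)
  then have "nrep L p = inverse (peval L v) *s v"
    by (simp add: nrep_def)
  with eq show ?thesis
    by simp
qed

lemma nrep_mem: "nrep L p \<in> p"
  and peval_nrep: "peval L (nrep L p) = 1"
  using nrep_unique by auto

lemma mem_eq_scale_nrep:
  assumes "w \<in> p"
  shows "\<exists>c. w = c *s nrep L p"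
proof -
  have "p = proj_pt (nrep L p)"
    using p nrep_mem by (simp add: normalizable_def is_ppoint_eq_proj_pt)
  with assms show ?thesis
    by (auto simp: proj_pt_def)
qed

end

lemma normalizable_LamA:
  assumes "invertible A" "normalizable L p"
  shows "normalizable (lamA A L) (LamA A p)"
  using assms is_ppoint_LamA
  by (auto simp: normalizable_def lamA_Pdeg LamA_def peval_lamA_matrix_vector_mult)

lemma nrep_LamA:
  assumes "invertible A" "normalizable L p"
  shows "nrep (lamA A L) (LamA A p) = A *v nrep L p"
proof -
  have "A *v nrep L p \<in> LamA A p" "peval (lamA A L) (A *v nrep L p) = 1"
    using assms nrep_mem peval_nrep by (auto simp: LamA_def peval_lamA_matrix_vector_mult)
  then show ?thesis
    using nrep_unique[OF normalizable_LamA[OF assms], of "A *v nrep L p"] by simp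
qed

lemma exists_linear_separator:
  assumes p: "normalizable L p" and q: "normalizable L q" and "p \<noteq> q"
  obtains l where "l \<in> Pdeg 1" "peval l (nrep L q) = 0" "peval l (nrep L p) = 1"
proof -
  let ?a = "nrep L p" and ?b = "nrep L q"
  have "p = proj_pt ?a" "q = proj_pt ?b"
    using p q nrep_mem[OF p] nrep_mem[OF q] is_ppoint_eq_proj_pt unfolding normalizable_def by blast+
  with \<open>p \<noteq> q\<close> have "?a \<noteq> ?b"
    by auto
  then obtain i where i: "?a $ i \<noteq> ?b $ i"
    by (metis vec_eq_iff)
  \<comment> \<open>vanishes at \<open>?b\<close> because \<open>L ?b = 1\<close>\<close>
  define l where "l = Const (inverse (?a $ i - ?b $ i)) * (Var i - Const (?b $ i) * L)"
  have "l \<in> Pdeg 1"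
    using q unfolding l_def normalizable_def by (intro Pdeg_Const_mult Pdeg_diff Pdeg_Var) auto
  moreover have "peval l (nrep L q) = 0" "peval l (nrep L p) = 1"
    using i by (simp_all add: l_def peval_mult peval_diff peval_nrep[OF p] peval_nrep[OF q])
  ultimately show ?thesis
    by (rule that)
qed

section \<open>The vanishing ideal\<close>

lemma vanI_zero [simp]: "0 \<in> vanI X"
  by (simp add: vanI_def)
lemma vanI_add: "f \<in> vanI X \<Longrightarrow> g \<in> vanI X \<Longrightarrow> f + g \<in> vanI X"
  by (simp add: vanI_def hcomp_add peval_add)
lemma vanI_diff: "f \<in> vanI X \<Longrightarrow> g \<in> vanI X \<Longrightarrow> f - g \<in> vanI X"
  by (simp add: vanI_def hcomp_diff peval_diff)
lemma vanI_sum: "(\<And>i. i \<in> I \<Longrightarrow> F i \<in> vanI X) \<Longrightarrow> (\<Sum>i\<in>I. F i) \<in> vanI X"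
  by (induct I rule: infinite_finite_induct) (auto intro: vanI_add)

lemma vanI_mult_right:
  assumes "f \<in> vanI X"
  shows "f * g \<in> vanI X"
  unfolding vanI_def mem_Collect_eq
proof (intro allI ballI)
  fix j p v assume "p \<in> X" "v \<in> p"
  then have "peval (hcomp a f) v = 0" for a
    using assms by (auto simp: vanI_def)
  then have "peval (if j = a + b then hcomp a f * hcomp b g else 0) v = 0" for a b
    by (simp add: peval_mult)
  moreover let ?D = "mdeg ` Poly_Mapping.keys f \<union> mdeg ` Poly_Mapping.keys g"
  have "hcomp j (f * g) = (\<Sum>a\<in>?D. \<Sum>b\<in>?D. if j = a + b then hcomp a f * hcomp b g else 0)"
    by (intro hcomp_mult) auto
  ultimately show "peval (hcomp j (f * g)) v = 0"
    by (simp add: peval_sum)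
qed

lemma vanI_mult_left: "g \<in> vanI X \<Longrightarrow> f * g \<in> vanI X"
  using vanI_mult_right[of g X f] by (simp add: mult.commute)

lemma vanI_cong_mult:
  assumes "a - a' \<in> vanI X" "b - b' \<in> vanI X"
  shows "a * b - a' * b' \<in> vanI X"
proof -
  have "a * b - a' * b' = (a - a') * b + a' * (b - b')"
    by (simp add: algebra_simps)
  then show ?thesis
    using assms by (simp add: vanI_add vanI_mult_right vanI_mult_left)
qed

lemma vanI_cong_sum:
  "(\<And>i. i \<in> I \<Longrightarrow> F i - G i \<in> vanI X) \<Longrightarrow> (\<Sum>i\<in>I. F i) - (\<Sum>i\<in>I. G i) \<in> vanI X"
  using vanI_sum[of I "\<lambda>i. F i - G i" X] by (simp add: sum_subtractf)

lemma Pdeg_vanI_iff: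
  assumes X: "\<forall>p\<in>X. normalizable L p" and f: "f \<in> Pdeg d"
  shows "f \<in> vanI X \<longleftrightarrow> (\<forall>p\<in>X. peval f (nrep L p) = 0)"
proof
  assume "f \<in> vanI X"
  then have "peval (hcomp d f) (nrep L p) = 0" if "p \<in> X" for p
    using that X nrep_mem unfolding vanI_def by blast
  then show "\<forall>p\<in>X. peval f (nrep L p) = 0"
    by (simp add: hcomp_Pdeg_eq[OF f])
next
  assume zero: "\<forall>p\<in>X. peval f (nrep L p) = 0"
  have vanish: "peval f v = 0" if "p \<in> X" "v \<in> p" for p v
  proof -
    have "normalizable L p"
      using X that(1) by blast
    from mem_eq_scale_nrep[OF this that(2)] obtain c where "v = c *s nrep L p" ..
    then show ?thesis
      using zero that(1) by (simp add: peval_homogeneous[OF f])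
  qed
  show "f \<in> vanI X"
    unfolding vanI_def
  proof (intro CollectI allI ballI)
    fix j p v assume "p \<in> X" "v \<in> p"
    then show "peval (hcomp j f) v = 0"
      using vanish[of p v] by (simp add: hcomp_Pdeg_eq[OF f])
  qed
qed

lemma lamA_vanI:
  assumes "invertible A" "f \<in> vanI X"
  shows "lamA A f \<in> vanI (LamA A ` X)"
  using assms by (auto simp: vanI_def LamA_def hcomp_lamA peval_lamA_matrix_vector_mult)

lemma coord_change_vanI:
  assumes "g \<in> vanI (LamA A ` X)"
  shows "coord_change A g \<in> vanI X"
  using assms by (auto simp: vanI_def LamA_def hcomp_coord_change peval_coord_change)

lemma lamA_image_Pdeg_Int_vanI:
  assumes "invertible A"
  shows "lamA A ` (Pdeg i \<inter> vanI X) = Pdeg i \<inter> vanI (LamA A ` X)"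
proof
  show "lamA A ` (Pdeg i \<inter> vanI X) \<subseteq> Pdeg i \<inter> vanI (LamA A ` X)"
    using assms lamA_Pdeg lamA_vanI by blast
  show "Pdeg i \<inter> vanI (LamA A ` X) \<subseteq> lamA A ` (Pdeg i \<inter> vanI X)"
  proof
    fix g assume "g \<in> Pdeg i \<inter> vanI (LamA A ` X)"
    then have "coord_change A g \<in> Pdeg i \<inter> vanI X"
      by (simp add: coord_change_Pdeg coord_change_vanI)
    then show "g \<in> lamA A ` (Pdeg i \<inter> vanI X)"
      using lamA_coord_change[OF assms] by (metis image_eqI)
  qed
qed

section \<open>Hilbert function and separators\<close>

interpretation poly_space: vector_space "smul :: 'a::field \<Rightarrow> ('n, 'a) mpoly \<Rightarrow> ('n, 'a) mpoly"
  by unfold_locales (simp_all add: smul_eq_Const_mult Const_add Const_mult algebra_simps)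

lemma linear_lamA: "Vector_Spaces.linear smul smul (lamA A)"
  by (simp add: Vector_Spaces.linear_iff poly_space.vector_space_axioms lamA_add lamA_smul)

lemma hf_LamA:
  assumes "invertible A"
  shows "hf (LamA A ` X) i = hf X i"
proof -
  interpret Vector_Spaces.linear smul smul "lamA A"
    by (rule linear_lamA)
  show ?thesis
    unfolding hf_def lamA_image_Pdeg_Int_vanI[OF assms, symmetric]
    by (simp add: dim_image_eq_of_inj inj_lamA[OF assms])
qed

lemma regidx_LamA:
  assumes "invertible A"
  shows "regidx (LamA A ` X) = regidx X"
proof -
  have "card (LamA A ` X) = card X"
    using inj_LamA[OF assms] by (simp add: card_image inj_on_subset)
  then show ?thesis
    by (simp add: regidx_def hf_LamA[OF assms])
qed

lemma Pdeg_subset_span_monomials: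
  "Pdeg r \<subseteq> poly_space.span ((\<lambda>m. Poly_Mapping.single m (1::'a::field)) ` {m :: 'n::finite \<Rightarrow>\<^sub>0 nat. mdeg m = r})"
proof
  fix f :: "('n, 'a) mpoly" assume f: "f \<in> Pdeg r"
  have "f = (\<Sum>m\<in>Poly_Mapping.keys f. smul (Poly_Mapping.lookup f m) (Poly_Mapping.single m 1))"
    by (subst poly_mapping_eq_sum_single) (simp add: smul_def)
  also have "\<dots> \<in> poly_space.span ((\<lambda>m. Poly_Mapping.single m 1) ` {m. mdeg m = r})"
    using f by (intro poly_space.span_sum poly_space.span_scale poly_space.span_base) (auto simp: Pdeg_def)
  finally show "f \<in> poly_space.span ((\<lambda>m. Poly_Mapping.single m 1) ` {m. mdeg m = r})" .
qed

lemma subspace_Pdeg: "poly_space.subspace (Pdeg r :: ('n::finite, 'a::field) mpoly set)"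
  by (rule poly_space.subspaceI) (auto intro: Pdeg_add Pdeg_smul)

lemma dim_Pdeg_0: "poly_space.dim (Pdeg 0 :: ('n::finite, 'a::field) mpoly set) \<le> 1"
proof -
  have "poly_space.dim (Pdeg 0 :: ('n, 'a) mpoly set)
      \<le> card ((\<lambda>m. Poly_Mapping.single m (1::'a)) ` {m :: 'n \<Rightarrow>\<^sub>0 nat. mdeg m = 0})"
    by (rule poly_space.dim_le_card[OF Pdeg_subset_span_monomials]) (simp add: finite_mdeg_eq)
  also have "{m :: 'n \<Rightarrow>\<^sub>0 nat. mdeg m = 0} = {0}"
    by (auto simp: mdeg_eq_0_iff)
  finally show ?thesis
    by simp
qed

text \<open>The evaluation map \<open>P\<^sub>r \<rightarrow> F\<^sup>X\<close>, with \<open>F\<^sup>X\<close> realised as the functions on point sets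
  that vanish outside \<open>X\<close>.\<close>

definition evals :: "('a::field^'n::finite) set set \<Rightarrow> ('n, 'a) mpoly \<Rightarrow> ('n, 'a) mpoly \<Rightarrow> ('a^'n) set \<Rightarrow> 'a"
  where "evals X L f p = (if p \<in> X then peval f (nrep L p) else 0)"

lemma linear_evals: "Vector_Spaces.linear smul (\<lambda>c u x. c * u x) (evals X L)"
  by (simp add: Vector_Spaces.linear_iff poly_space.vector_space_axioms fun_space.vector_space_axioms
      fun_eq_iff evals_def peval_add peval_smul)

lemma hf_eq_dim_evals:
  assumes "\<forall>p\<in>X. normalizable L p"
  shows "hf X r = fun_space.dim (evals X L ` Pdeg r)"
proof -
  interpret Vector_Spaces.linear smul "\<lambda>c u x. c * u x" "evals X L"
    by (rule linear_evals)
  have "{f \<in> Pdeg r. evals X L f = 0} = Pdeg r \<inter> vanI X"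
    using Pdeg_vanI_iff[OF assms] by (auto simp: evals_def fun_eq_iff)
  then show ?thesis
    using dim_eq_dim_kernel_add_dim_image[OF subspace_Pdeg Pdeg_subset_span_monomials]
    by (simp add: hf_def finite_mdeg_eq)
qed

definition is_separator :: "('a::field^'n::finite) set set \<Rightarrow> ('n, 'a) mpoly \<Rightarrow> nat \<Rightarrow> ('a^'n) set
    \<Rightarrow> ('n, 'a) mpoly \<Rightarrow> bool"
  where "is_separator X L r q s \<longleftrightarrow>
    s \<in> Pdeg r \<and> (\<forall>p\<in>X. peval s (nrep L p) = (if p = q then 1 else 0))"

lemma is_separator_iff_evals:
  "q \<in> X \<Longrightarrow> is_separator X L r q s \<longleftrightarrow> s \<in> Pdeg r \<and> evals X L s = indicator {q}"
  by (auto simp: is_separator_def evals_def fun_eq_iff indicator_def)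

lemma ex_separator_iff_indicator_in_image:
  assumes q: "q \<in> X"
  shows "(\<exists>s. is_separator X L r q s) \<longleftrightarrow> indicator {q} \<in> evals X L ` Pdeg r"
proof
  assume "\<exists>s. is_separator X L r q s"
  then obtain s where "is_separator X L r q s" ..
  then have "s \<in> Pdeg r" "evals X L s = indicator {q}"
    by (simp_all add: is_separator_iff_evals[OF q])
  then show "indicator {q} \<in> evals X L ` Pdeg r"
    by (intro image_eqI[OF sym])
next
  assume "indicator {q} \<in> evals X L ` Pdeg r"
  then obtain s where "indicator {q} = evals X L s" "s \<in> Pdeg r"
    by (rule imageE)
  then have "is_separator X L r q s"
    by (simp add: is_separator_iff_evals[OF q])
  then show "\<exists>s. is_separator X L r q s" ..
qed

lemma hf_eq_card_iff_separators:
  fixes X :: "('a::{field,finite}^'n::finite) set set"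
  assumes "finite X" "\<forall>p\<in>X. normalizable L p"
  shows "hf X r = card X \<longleftrightarrow> (\<forall>q\<in>X. \<exists>s. is_separator X L r q s)"
proof -
  interpret Vector_Spaces.linear smul "\<lambda>c u x. c * u x" "evals X L"
    by (rule linear_evals)
  let ?E = "evals X L ` Pdeg r" and ?W = "(\<lambda>q. indicator {q}) ` X :: (('a^'n) set \<Rightarrow> 'a) set"
  have E_subspace: "fun_space.subspace ?E"
    by (rule subspace_image[OF subspace_Pdeg])
  have E_span: "?E \<subseteq> fun_space.span ?W"
    using assms(1) by (auto simp: evals_def intro!: fun_space_span_indicators)
  have W_ind: "fun_space.independent ?W"
    by (rule fun_space_independent_indicators[OF assms(1)])
  have W_card: "card ?W = card X"
    by (rule card_image[OF inj_on_subset[OF inj_indicator_singleton subset_UNIV]])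
  have separators_iff: "(\<forall>q\<in>X. \<exists>s. is_separator X L r q s) \<longleftrightarrow> ?W \<subseteq> ?E"
    unfolding image_subset_iff by (simp add: ex_separator_iff_indicator_in_image)
  show ?thesis
    unfolding hf_eq_dim_evals[OF assms(2)] separators_iff
  proof
    assume "fun_space.dim ?E = card X"
    then have "fun_space.span ?W \<subseteq> ?E"
      using W_card assms(1) by (intro fun_space.span_subset_of_dim_eq_card[OF E_subspace E_span W_ind]) simp_all
    then show "?W \<subseteq> ?E"
      by (rule order_trans[OF fun_space.span_superset])
  next
    assume "?W \<subseteq> ?E"
    then have "fun_space.span ?W \<subseteq> ?E"
      by (rule fun_space.span_minimal[OF _ E_subspace])
    with E_span have "?E = fun_space.span ?W"
      by (rule antisym)
    then show "fun_space.dim ?E = card X"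
      using W_card by (simp add: fun_space.dim_eq_card_independent[OF W_ind])
  qed
qed

lemma exists_separator_card_minus_one:
  assumes X: "finite X" "\<forall>p\<in>X. normalizable L p" and q: "q \<in> X"
  shows "\<exists>s. is_separator X L (card X - 1) q s"
proof -
  have "\<exists>l. l \<in> Pdeg 1 \<and> peval l (nrep L p) = 0 \<and> peval l (nrep L q) = 1" if "p \<in> X - {q}" for p
  proof -
    have "normalizable L q" "normalizable L p" "q \<noteq> p"
      using X(2) q that by auto
    then obtain l where "l \<in> Pdeg 1" "peval l (nrep L p) = 0" "peval l (nrep L q) = 1"
      by (rule exists_linear_separator)
    then show ?thesis
      by blast
  qed
  then obtain l where l: "\<forall>p\<in>X - {q}. l p \<in> Pdeg 1 \<and> peval (l p) (nrep L p) = 0 \<and> peval (l p) (nrep L q) = 1"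
    by metis
  let ?s = "\<Prod>p\<in>X - {q}. l p"
  have "?s \<in> Pdeg (\<Sum>p\<in>X - {q}. 1)"
    using l by (intro Pdeg_prod) auto
  then have "?s \<in> Pdeg (card X - 1)"
    using X(1) q by simp
  moreover have "peval ?s (nrep L p) = (if p = q then 1 else 0)" if "p \<in> X" for p
  proof (cases "p = q")
    case True
    then show ?thesis
      using l by (simp add: peval_prod)
  next
    case False
    then have "peval (l p) (nrep L p) = 0"
      using l that by simp
    then show ?thesis
      using False that X(1) by (auto simp: peval_prod intro: prod_zero)
  qed
  ultimately show ?thesis
    unfolding is_separator_def by blast
qed

lemma hf_regidx:
  assumes "finite X" "\<forall>p\<in>X. normalizable L p"
  shows "hf X (regidx X) = card X"
proof -
  have "hf X (card X - 1) = card X"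
    unfolding hf_eq_card_iff_separators[OF assms] using exists_separator_card_minus_one[OF assms] by blast
  then show ?thesis
    unfolding regidx_def by (rule LeastI)
qed

lemma is_separator_sep:
  assumes "finite X" "\<forall>p\<in>X. normalizable L p" "q \<in> X"
  shows "is_separator X L (regidx X) q (sep X L q)"
proof -
  have "\<exists>s. is_separator X L (regidx X) q s"
    using hf_regidx[OF assms(1,2)] hf_eq_card_iff_separators[OF assms(1,2)] assms(3) by blast
  then show ?thesis
    unfolding sep_def is_separator_def by (rule someI_ex)
qed

lemma regidx_pos:
  fixes X :: "('a::{field,finite}^'n::finite) set set"
  assumes "finite X" "\<forall>p\<in>X. normalizable L p" "2 \<le> card X"
  shows "1 \<le> regidx X"
proof (rule ccontr)
  assume "\<not> 1 \<le> regidx X"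
  then have "regidx X = 0"
    by linarith
  with hf_regidx[OF assms(1,2)] have "hf X 0 = card X"
    by simp
  moreover have "hf X 0 \<le> 1"
    using dim_Pdeg_0[where 'n = 'n and 'a = 'a] by (simp add: hf_def)
  ultimately show False
    using assms(3) by simp
qed

section \<open>Transport of the canonical ideal\<close>

lemma FL_psubst:
  assumes "u \<in> FL L"
  shows "psubst \<sigma> u \<in> FL (psubst \<sigma> L)"
proof -
  obtain N c where "u = (\<Sum>i<N. Const (c i) * L ^ i)"
    using assms by (auto simp: FL_def)
  then have "psubst \<sigma> u = (\<Sum>i<N. Const (c i) * psubst \<sigma> L ^ i)"
    by (simp add: psubst_sum psubst_mult psubst_power)
  then show ?thesis
    unfolding FL_def by blast
qed

lemma is_hom_lamA:
  assumes A: "invertible A" and \<phi>: "is_hom X L \<phi>"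
  shows "is_hom (LamA A ` X) (lamA A L) (\<lambda>f. lamA A (\<phi> (coord_change A f)))"
proof -
  let ?X' = "LamA A ` X" and ?C = "coord_change A"
  have fw: "lamA A (a - b) \<in> vanI ?X'" if "a - b \<in> vanI X" for a b
    using lamA_vanI[OF A that] .
  have bw: "?C a - ?C b \<in> vanI X" if "a - b \<in> vanI ?X'" for a b
    using coord_change_vanI[OF that] by (simp add: coord_change_diff)
  show ?thesis
    unfolding is_hom_def
  proof (intro conjI allI impI ballI)
    fix f g assume "f - g \<in> vanI ?X'"
    then show "lamA A (\<phi> (?C f)) - lamA A (\<phi> (?C g)) \<in> vanI ?X'"
      using \<phi> bw fw by (simp add: is_hom_def lamA_diff)
  next
    fix f
    have "\<exists>u\<in>FL L. \<phi> (?C f) - u \<in> vanI X"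
      using \<phi> by (simp add: is_hom_def)
    then obtain u where u: "u \<in> FL L" "\<phi> (?C f) - u \<in> vanI X" ..
    have "lamA A u \<in> FL (lamA A L)"
      unfolding lamA_def by (rule FL_psubst[OF u(1)])
    moreover have "lamA A (\<phi> (?C f)) - lamA A u \<in> vanI ?X'"
      using fw[OF u(2)] by (simp add: lamA_diff)
    ultimately show "\<exists>u\<in>FL (lamA A L). lamA A (\<phi> (?C f)) - u \<in> vanI ?X'"
      by blast
  next
    fix f g
    have "\<phi> (?C f + ?C g) - (\<phi> (?C f) + \<phi> (?C g)) \<in> vanI X"
      using \<phi> by (simp add: is_hom_def)
    from lamA_vanI[OF A this]
    show "lamA A (\<phi> (?C (f + g))) - (lamA A (\<phi> (?C f)) + lamA A (\<phi> (?C g))) \<in> vanI ?X'"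
      by (simp add: coord_change_add lamA_diff lamA_add)
  next
    fix u f assume "u \<in> FL (lamA A L)"
    then have "?C u \<in> FL (?C (lamA A L))"
      unfolding coord_change_def by (rule FL_psubst)
    then have "?C u \<in> FL L"
      by (simp add: coord_change_lamA[OF A])
    then have "lamA A (\<phi> (?C u * ?C f) - ?C u * \<phi> (?C f)) \<in> vanI ?X'"
      using \<phi> fw by (simp add: is_hom_def lamA_diff)
    then show "lamA A (\<phi> (?C (u * f))) - u * lamA A (\<phi> (?C f)) \<in> vanI ?X'"
      by (simp add: coord_change_mult lamA_diff lamA_mult lamA_coord_change[OF A])
  qed
qed

lemma sep_LamA_cong:
  assumes A: "invertible A" and X: "finite X" "\<forall>p\<in>X. normalizable L p" and p: "p \<in> X"
  shows "sep (LamA A ` X) (lamA A L) (LamA A p) - lamA A (sep X L p) \<in> vanI (LamA A ` X)"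
proof -
  let ?X' = "LamA A ` X" and ?L' = "lamA A L"
  have X': "finite ?X'" "\<forall>p\<in>?X'. normalizable ?L' p"
    using X normalizable_LamA[OF A] by auto
  have s': "is_separator ?X' ?L' (regidx X) (LamA A p) (sep ?X' ?L' (LamA A p))"
    using is_separator_sep[OF X'] p regidx_LamA[OF A] by fastforce
  have s: "is_separator X L (regidx X) p (sep X L p)"
    by (rule is_separator_sep[OF X p])
  have "sep ?X' ?L' (LamA A p) - lamA A (sep X L p) \<in> Pdeg (regidx X)"
    using s s' by (intro Pdeg_diff lamA_Pdeg) (simp_all add: is_separator_def)
  moreover have "peval (sep ?X' ?L' (LamA A p) - lamA A (sep X L p)) (nrep ?L' p') = 0" if p': "p' \<in> ?X'" for p'
  proof -
    obtain p2 where p2: "p2 \<in> X" "p' = LamA A p2"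
      using p' by blast
    have "LamA A p2 = LamA A p \<longleftrightarrow> p2 = p"
      using inj_LamA[OF A] by (auto dest: injD)
    then show ?thesis
      using s s' p2 X(2) by (simp add: is_separator_def peval_diff nrep_LamA[OF A] peval_lamA_matrix_vector_mult[OF A])
  qed
  ultimately show ?thesis
    using Pdeg_vanI_iff[OF X'(2)] by blast
qed

lemma separator_term_LamA_cong:
  assumes A: "invertible A" and X: "finite X" "\<forall>p\<in>X. normalizable L p"
    and \<phi>: "is_hom X L \<phi>" and p: "p \<in> X"
  defines "s' \<equiv> sep (LamA A ` X) (lamA A L) (LamA A p)"
  shows "lamA A (\<phi> (coord_change A s')) * s' - lamA A (\<phi> (sep X L p) * sep X L p) \<in> vanI (LamA A ` X)"
proof -
  have s: "s' - lamA A (sep X L p) \<in> vanI (LamA A ` X)"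
    unfolding s'_def by (rule sep_LamA_cong[OF A X p])
  then have "coord_change A s' - sep X L p \<in> vanI X"
    using coord_change_vanI[OF s] by (simp add: coord_change_diff coord_change_lamA[OF A])
  then have "\<phi> (coord_change A s') - \<phi> (sep X L p) \<in> vanI X"
    using \<phi> by (simp add: is_hom_def)
  then have "lamA A (\<phi> (coord_change A s') - \<phi> (sep X L p)) \<in> vanI (LamA A ` X)"
    by (rule lamA_vanI[OF A])
  from vanI_cong_mult[OF this[unfolded lamA_diff] s] show ?thesis
    by (simp add: lamA_mult)
qed

lemma Jhat_LamA:
  assumes A: "invertible A" and X: "finite X" "\<forall>p\<in>X. normalizable L p" and g: "g \<in> Jhat X L"
  shows "lamA A g \<in> Jhat (LamA A ` X) (lamA A L)"
proof -
  let ?X' = "LamA A ` X" and ?L' = "lamA A L" and ?C = "coord_change A"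
  obtain \<phi> where \<phi>: "is_hom X L \<phi>" and g: "g - (\<Sum>p\<in>X. \<phi> (sep X L p) * sep X L p) \<in> vanI X"
    using g by (auto simp: Jhat_def)
  define \<phi>' where "\<phi>' f = lamA A (\<phi> (?C f))" for f
  have \<phi>': "is_hom ?X' ?L' \<phi>'"
    unfolding \<phi>'_def[abs_def] by (rule is_hom_lamA[OF A \<phi>])
  have "\<phi>' (sep ?X' ?L' (LamA A p)) * sep ?X' ?L' (LamA A p) - lamA A (\<phi> (sep X L p) * sep X L p) \<in> vanI ?X'"
    if "p \<in> X" for p
    unfolding \<phi>'_def by (rule separator_term_LamA_cong[OF A X \<phi> that])
  then have "(\<Sum>p\<in>X. \<phi>' (sep ?X' ?L' (LamA A p)) * sep ?X' ?L' (LamA A p))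
      - lamA A (\<Sum>p\<in>X. \<phi> (sep X L p) * sep X L p) \<in> vanI ?X'"
    unfolding lamA_sum by (rule vanI_cong_sum)
  moreover have "lamA A g - lamA A (\<Sum>p\<in>X. \<phi> (sep X L p) * sep X L p) \<in> vanI ?X'"
    using lamA_vanI[OF A g] by (simp add: lamA_diff)
  moreover have "(\<Sum>p\<in>X. \<phi>' (sep ?X' ?L' (LamA A p)) * sep ?X' ?L' (LamA A p))
      = (\<Sum>p'\<in>?X'. \<phi>' (sep ?X' ?L' p') * sep ?X' ?L' p')"
    using inj_on_subset[OF inj_LamA[OF A] subset_UNIV] by (simp add: sum.reindex)
  ultimately have "lamA A g - (\<Sum>p'\<in>?X'. \<phi>' (sep ?X' ?L' p') * sep ?X' ?L' p') \<in> vanI ?X'"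
    using vanI_diff by fastforce
  with \<phi>' show ?thesis
    by (auto simp: Jhat_def)
qed

section \<open>Inverse systems\<close>

lemma lookup_zero_vanI:
  assumes "p \<in> X" "is_ppoint p" "f \<in> vanI X"
  shows "Poly_Mapping.lookup f 0 = 0"
proof -
  obtain w where "w \<in> p"
    using assms(2) proj_pt_mem by (auto simp: is_ppoint_def)
  then have "peval (hcomp 0 f) w = 0"
    using assms(1,3) by (auto simp: vanI_def)
  then show ?thesis
    by (simp add: hcomp_zero_eq_Const)
qed

text \<open>This is where \<open>2 \<le> card X\<close> enters: it forces separators to have positive degree.\<close>

lemma lookup_zero_Jhat:
  fixes X :: "('a::{field,finite}^'n::finite) set set"
  assumes X: "finite X" "\<forall>p\<in>X. normalizable L p" "2 \<le> card X" and g: "g \<in> Jhat X L"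
  shows "Poly_Mapping.lookup g 0 = 0"
proof -
  obtain \<phi> where \<phi>: "g - (\<Sum>p\<in>X. \<phi> (sep X L p) * sep X L p) \<in> vanI X"
    using g by (auto simp: Jhat_def)
  have "X \<noteq> {}"
    using X(3) by auto
  then obtain p where "p \<in> X"
    by blast
  then have "Poly_Mapping.lookup (g - (\<Sum>p\<in>X. \<phi> (sep X L p) * sep X L p)) 0 = 0"
    using X(2) \<phi> by (intro lookup_zero_vanI) (auto simp: normalizable_def)
  moreover have "Poly_Mapping.lookup (sep X L q) 0 = 0" if "q \<in> X" for q
    using is_separator_sep[OF X(1,2) that] regidx_pos[OF X] by (auto simp: is_separator_def Pdeg_iff mdeg_def)
  ultimately show ?thesis
    by (simp add: lookup_minus lookup_sum lookup_mult_zero)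
qed

lemma constant_term_in_gdual: "(\<lambda>f. Poly_Mapping.lookup f 0) \<in> (gdual :: (('n::finite, 'a::field) mpoly \<Rightarrow> 'a) set)"
proof -
  have "Poly_Mapping.lookup f 0 = 0" if "\<forall>m\<in>Poly_Mapping.keys f. 1 \<le> mdeg m" for f :: "('n, 'a) mpoly"
    using that[rule_format, of 0] by (auto simp: in_keys_iff mdeg_def)
  then show ?thesis
    unfolding gdual_def by (auto simp: lookup_add smul_eq_Const_mult lookup_mult_zero Const_def)
qed

lemma constant_term_in_iperp_Jhat:
  fixes X :: "('a::{field,finite}^'n::finite) set set"
  assumes "finite X" "\<forall>p\<in>X. normalizable L p" "2 \<le> card X"
  shows "(\<lambda>f. Poly_Mapping.lookup f 0) \<in> iperp (Jhat X L)"
  using lookup_zero_Jhat[OF assms] constant_term_in_gdual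
  by (simp add: iperp_def contr_def lookup_mult_zero fun_eq_iff)

lemma comp_lamA_in_gdual:
  assumes "\<psi> \<in> gdual"
  shows "(\<lambda>g. \<psi> (lamA A g)) \<in> gdual"
proof -
  obtain N where N: "\<And>f. \<forall>m\<in>Poly_Mapping.keys f. N \<le> mdeg m \<Longrightarrow> \<psi> f = 0"
    using assms by (auto simp: gdual_def)
  have "\<psi> (lamA A f) = 0" if "\<forall>m\<in>Poly_Mapping.keys f. N \<le> mdeg m" for f
    using that by (intro N) (simp add: keys_mdeg_ge_iff_hcomp hcomp_lamA)
  then show ?thesis
    using assms by (auto simp: gdual_def lamA_add lamA_smul)
qed

lemma comp_lamA_in_iperp_Jhat:
  assumes "invertible A" "finite X" "\<forall>p\<in>X. normalizable L p"
    and "\<psi> \<in> iperp (Jhat (LamA A ` X) (lamA A L))"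
  shows "(\<lambda>g. \<psi> (lamA A g)) \<in> iperp (Jhat X L)"
proof -
  have "contr (lamA A j) \<psi> (lamA A g) = 0" if "j \<in> Jhat X L" for j g
    using assms(4) Jhat_LamA[OF assms(1-3) that] by (simp add: iperp_def)
  then show ?thesis
    using assms(4) comp_lamA_in_gdual by (auto simp: iperp_def contr_def lamA_mult fun_eq_iff)
qed

lemma is_mip_gdual: "is_mip X L \<Phi> \<Longrightarrow> \<Phi> \<in> gdual"
  and is_mip_eq_hcomp: "is_mip X L \<Phi> \<Longrightarrow> \<Phi> g = \<Phi> (hcomp (2 * regidx X - 1) g)"
  and is_mip_iperp_eq: "is_mip X L \<Phi> \<Longrightarrow> iperp (Jhat X L) = {contr f \<Phi> | f. True}"
  unfolding is_mip_def by blast+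

lemma is_mip_in_iperp:
  assumes "is_mip X L \<Phi>"
  shows "\<Phi> \<in> iperp (Jhat X L)"
proof -
  have "contr 1 \<Phi> \<in> iperp (Jhat X L)"
    unfolding is_mip_iperp_eq[OF assms] by blast
  then show ?thesis
    by (simp add: contr_def)
qed

lemma is_mip_contr_top_degree:
  assumes "is_mip X L \<Phi>" "g \<in> Pdeg (2 * regidx X - 1)"
  shows "contr h \<Phi> g = Poly_Mapping.lookup h 0 * \<Phi> g"
proof -
  have "contr h \<Phi> g = \<Phi> (hcomp (2 * regidx X - 1) (h * g))"
    unfolding contr_def by (rule is_mip_eq_hcomp[OF assms(1)])
  also have "\<dots> = \<Phi> (smul (Poly_Mapping.lookup h 0) g)"
    by (subst hcomp_mult_Pdeg[OF assms(2)]) (simp add: smul_eq_Const_mult)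
  also have "\<dots> = Poly_Mapping.lookup h 0 * \<Phi> g"
    using is_mip_gdual[OF assms(1)] by (simp add: gdual_def)
  finally show ?thesis .
qed

lemma is_mip_nonzero_top_degree:
  fixes X :: "('a::{field,finite}^'n::finite) set set"
  assumes "is_mip X L \<Phi>" "finite X" "\<forall>p\<in>X. normalizable L p" "2 \<le> card X"
  obtains g where "g \<in> Pdeg (2 * regidx X - 1)" "\<Phi> g \<noteq> 0"
proof -
  have "(\<lambda>g. Poly_Mapping.lookup g 0) \<in> {contr f \<Phi> | f. True}"
    using constant_term_in_iperp_Jhat[OF assms(2-4)] unfolding is_mip_iperp_eq[OF assms(1)] .
  then obtain f where f: "(\<lambda>g. Poly_Mapping.lookup g 0) = contr f \<Phi>"
    by blast
  have "\<Phi> f = 1"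
    using fun_cong[OF f, of 1] by (simp add: contr_def)
  then have "\<Phi> (hcomp (2 * regidx X - 1) f) \<noteq> 0"
    using is_mip_eq_hcomp[OF assms(1), of f] by simp
  with hcomp_Pdeg show ?thesis
    by (rule that)
qed

theorem theorem7p7:
  fixes X X' :: "('a::{field,finite}^'n::finite) set set"
    and L L' :: "('n, 'a) mpoly"
    and \<Phi> \<Phi>' :: "('n, 'a) mpoly \<Rightarrow> 'a"
    and A :: "'a^'n^'n" and n :: nat
  assumes "n \<ge> 2"
    and "finite X" "card X = n" "\<forall>p\<in>X. is_ppoint p"
    and "finite X'" "card X' = n" "\<forall>p\<in>X'. is_ppoint p"
    and "L \<in> Pdeg 1" "\<forall>p\<in>X. \<forall>v\<in>p. peval L v \<noteq> 0"
    and "L' \<in> Pdeg 1" "\<forall>p\<in>X'. \<forall>v\<in>p. peval L' v \<noteq> 0"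
    and "is_mip X L \<Phi>" "is_mip X' L' \<Phi>'"
    and "invertible A" "lamA A L = L'"
    and "LamA A ` X = X'"
  shows "regidx X = regidx X' \<and>
         (\<exists>c. c \<noteq> 0 \<and> (\<forall>g\<in>Pdeg (2 * regidx X - 1). \<Phi>' (lamA A g) = c * \<Phi> g))"
proof -
  have X: "\<forall>p\<in>X. normalizable L p" and X': "\<forall>p\<in>X'. normalizable L' p"
    using assms(4,7-11) by (auto simp: normalizable_def)
  have r: "regidx X' = regidx X"
    using regidx_LamA[OF assms(14), of X] unfolding assms(16) .
  have "(\<lambda>g. \<Phi>' (lamA A g)) \<in> iperp (Jhat X L)"
    using comp_lamA_in_iperp_Jhat[OF assms(14,2) X] is_mip_in_iperp[OF assms(13)] assms(15,16) by simp
  then obtain h where h: "(\<lambda>g. \<Phi>' (lamA A g)) = contr h \<Phi>"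
    unfolding is_mip_iperp_eq[OF assms(12)] by blast
  let ?c = "Poly_Mapping.lookup h 0"
  have key: "\<Phi>' (lamA A g) = ?c * \<Phi> g" if "g \<in> Pdeg (2 * regidx X - 1)" for g
    using fun_cong[OF h, of g] is_mip_contr_top_degree[OF assms(12) that] by simp
  obtain g' where g': "g' \<in> Pdeg (2 * regidx X - 1)" "\<Phi>' g' \<noteq> 0"
    using is_mip_nonzero_top_degree[OF assms(13,5) X'] assms(1,6) r by auto
  have "\<Phi>' g' = \<Phi>' (lamA A (coord_change A g'))"
    by (simp add: lamA_coord_change[OF assms(14)])
  also have "\<dots> = ?c * \<Phi> (coord_change A g')"
    by (rule key[OF coord_change_Pdeg[OF g'(1)]])
  finally have "?c \<noteq> 0"
    using g'(2) by auto
  with r key show ?thesis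
    by auto
qed

end
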